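(* Let $(S_n)_{n\ge0}$ be defined by $S_0=3$, $S_1=1$, $S_2=3$ and $S_{n+1}=S_n+S_{n-1}+S_{n-2}$ for $n\ge 2$. Let $\alpha,\beta,\gamma$ be the roots of $x^3-x^2-x-1=0$ and $C_n=\alpha^n\beta^n+\alpha^n\gamma^n+\beta^n\gamma^n$ for $n\ge0$. Then for all $n\ge 0$, $$S_nS_{2n}=S_{3n}+S_nC_n-3.$$
   Context: $S_n$ is the generalized Lucas (generalized Tribonacci) sequence. *)

theory Defs
  imports Complex_Main
begin

fun S :: "nat \<Rightarrow> int" where
  "S 0 = 3"
| "S (Suc 0) = 1"
| "S (Suc (Suc 0)) = 3"
| "S (Suc (Suc (Suc n))) = S (Suc (Suc n)) + S (Suc n) + S n"

definition C :: "complex \<Rightarrow> complex \<Rightarrow> complex \<Rightarrow> nat \<Rightarrow> complex" where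
  "C a b c n = a^n * b^n + a^n * c^n + b^n * c^n"

end

theory Submission
  imports Defs
begin

text \<open>Since \<alpha>, \<beta>, \<gamma> are the roots of the characteristic polynomial of the recurrence and
  S agrees with their power sums at n = 0, 1, 2, we have S n = \<alpha>^n + \<beta>^n + \<gamma>^n.
  Put x = \<alpha>^n, y = \<beta>^n, z = \<gamma>^n: then S n, S (2n), S (3n) and C n are the power sums
  p1, p2, p3 and the elementary symmetric function e2 of x, y, z, while e3 = (\<alpha>\<beta>\<gamma>)^n = 1.
  The claim is Newton's identity p3 = e1 p2 - e2 p1 + 3 e3.\<close>

lemma vieta_cubic:
  fixes a b c p q r :: "'a::{idom,ring_char_0}"
  assumes factored: "\<And>x. x^3 + p*x^2 + q*x + r = (x - a) * (x - b) * (x - c)"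
  shows "a + b + c = - p" and "a*b + b*c + c*a = q" and "a*b*c = - r"
proof -
  have at_0: "r = - (a*b*c)"
    using factored[of 0] by simp
  have at_1: "1 + p + q + r = 1 - (a + b + c) + (a*b + b*c + c*a) - a*b*c"
    using factored[of 1] by (simp add: algebra_simps)
  have at_minus_1: "- 1 + p - q + r = - 1 - (a + b + c) - (a*b + b*c + c*a) - a*b*c"
    using factored[of "- 1"] by (simp add: algebra_simps)
  have "2 * (a + b + c) = 2 * - p"
    using at_0 at_1 at_minus_1 by algebra
  then show "a + b + c = - p"
    by (rule mult_left_cancel[THEN iffD1, rotated]) simp
  have "2 * (a*b + b*c + c*a) = 2 * q"
    using at_1 at_minus_1 by algebra
  then show "a*b + b*c + c*a = q"
    by (rule mult_left_cancel[THEN iffD1, rotated]) simp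
  show "a*b*c = - r"
    using at_0 by simp
qed

lemma tribonacci_root_power:
  fixes x :: "'a::comm_ring_1"
  assumes "x^3 = x^2 + x + 1"
  shows "x^Suc (Suc (Suc n)) = x^Suc (Suc n) + x^Suc n + x^n"
proof -
  have "x^Suc (Suc (Suc n)) = x^3 * x^n"
    by (simp add: power_add[symmetric] numeral_3_eq_3)
  also have "\<dots> = x^Suc (Suc n) + x^Suc n + x^n"
    by (simp add: assms algebra_simps power2_eq_square)
  finally show ?thesis .
qed

lemma S_eq_power_sum:
  fixes a b c :: "'a::comm_ring_1"
  assumes roots: "\<And>x. x \<in> {a, b, c} \<Longrightarrow> x^3 = x^2 + x + 1"
    and e1: "a + b + c = 1" and e2: "a*b + b*c + c*a = -1"
  shows "of_int (S n) = a^n + b^n + c^n"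
proof (induction n rule: S.induct)
  case 1
  then show ?case by simp
next
  case 2
  then show ?case using e1 by simp
next
  case 3
  have "a^2 + b^2 + c^2 = (a + b + c)^2 - 2 * (a*b + b*c + c*a)"
    by (simp add: algebra_simps power2_eq_square)
  then show ?case using e1 e2 by (simp add: numeral_2_eq_2)
next
  case (4 n)
  have "of_int (S (Suc (Suc (Suc n))))
      = (a^Suc (Suc n) + a^Suc n + a^n) + (b^Suc (Suc n) + b^Suc n + b^n)
        + (c^Suc (Suc n) + c^Suc n + c^n)"
    unfolding S.simps of_int_add "4.IH" by (simp only: ac_simps)
  also have "\<dots> = a^Suc (Suc (Suc n)) + b^Suc (Suc (Suc n)) + c^Suc (Suc (Suc n))"
    using tribonacci_root_power[OF roots] by (simp only: insertI1 insertI2 singletonI)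
  finally show ?case .
qed

lemma newton_identity_3:
  fixes x y z :: "'a::comm_ring_1"
  shows "(x + y + z) * (x^2 + y^2 + z^2)
    = x^3 + y^3 + z^3 + (x + y + z) * (x*y + x*z + y*z) - 3 * (x*y*z)"
  by (simp add: algebra_simps power2_eq_square power3_eq_cube)

theorem mainTheorem5:
  fixes \<alpha> \<beta> \<gamma> :: complex and n :: nat
  assumes roots: "\<And>x::complex. x^3 - x^2 - x - 1 = (x - \<alpha>) * (x - \<beta>) * (x - \<gamma>)"
  shows "of_int (S n) * of_int (S (2*n)) = of_int (S (3*n)) + of_int (S n) * C \<alpha> \<beta> \<gamma> n - 3"
proof -
  have factored: "x^3 + (-1)*x^2 + (-1)*x + (-1) = (x - \<alpha>) * (x - \<beta>) * (x - \<gamma>)" for x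
    using roots[of x] by simp
  have e1: "\<alpha> + \<beta> + \<gamma> = 1" and e2: "\<alpha>*\<beta> + \<beta>*\<gamma> + \<gamma>*\<alpha> = -1" and e3: "\<alpha>*\<beta>*\<gamma> = 1"
    using vieta_cubic[OF factored] by simp_all
  have cubic: "x^3 = x^2 + x + 1" if "x \<in> {\<alpha>, \<beta>, \<gamma>}" for x
    using roots[of x] that by (auto simp: algebra_simps)
  have power_sum: "of_int (S m) = \<alpha>^m + \<beta>^m + \<gamma>^m" for m
    using S_eq_power_sum[OF cubic e1 e2] by simp
  have "\<alpha>^n * \<beta>^n * \<gamma>^n = 1"
    using e3 by (simp flip: power_mult_distrib)
  then show ?thesis
    using newton_identity_3[of "\<alpha>^n" "\<beta>^n" "\<gamma>^n"]
    by (simp add: power_sum C_def power_mult mult.commute[of 2] mult.commute[of 3]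
        flip: power_mult)
qed

end
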